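(* Let $L\subset\mathbb{R}^3$ be a link (finite disjoint union of closed curves) of positive thickness. Then $L$ is regular. If moreover $L$ is $G$-invariant for a subgroup $G\subset\operatorname{O}(3)$, then $L$ is $G$-regular.
   Context: The thickness $\operatorname{Thi}(L)$ is the reach of $L$: the supremum of $\epsilon$ such that every point within distance $\epsilon$ of $L$ has a unique nearest point on $L$. A variation field $\eta$ is the initial velocity field of a smooth family $\phi^t$ ($t\in(-\epsilon,\epsilon)$) of $C^2$ diffeomorphisms of $\mathbb{R}^3$ with $\phi^0=\mathrm{Id}$; $\delta_\eta\operatorname{Thi}(L):=\frac{d}{dt^+}\operatorname{Thi}(\phi^t(L))|_{t=0}$. $L$ is regular if there is a variation field $\eta$ (a thickening field) with $\delta_\eta\operatorname{Thi}(L)>0$. $L$ is $G$-invariant if $gL=L$ for all $g\in G$; a field $\eta$ is $G$-invariant if $\eta(gx)=g\,\eta(x)$ for all $g\in G$, $x\in\mathbb{R}^3$. A $G$-invariant $L$ is $G$-regular if it has a $G$-invariant thickening field. *)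

theory Defs
  imports "HOL-Analysis.Analysis"
begin

type_synonym R3 = "real ^ 3"

definition closed_curve :: "R3 set \<Rightarrow> bool" where
  "closed_curve C \<longleftrightarrow>
     (\<exists>g. simple_path g \<and> pathfinish g = pathstart g \<and> C = path_image g)"

definition is_link :: "R3 set \<Rightarrow> bool" where
  "is_link L \<longleftrightarrow>
     (\<exists>\<C>. finite \<C> \<and> \<C> \<noteq> {} \<and> (\<forall>C\<in>\<C>. closed_curve C) \<and>
          pairwise disjnt \<C> \<and> L = \<Union>\<C>)"

text \<open>Thickness = reach: supremum of eps such that every point within distance eps
  of L has a unique nearest point on L.\<close>
definition Thi :: "R3 set \<Rightarrow> real" where
  "Thi L = Sup {\<epsilon>. 0 \<le> \<epsilon> \<and>
      (\<forall>x. infdist x L < \<epsilon> \<longrightarrow> (\<exists>!p. p \<in> L \<and> dist x p = infdist x L))}"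

definition C1_on :: "'a::real_normed_vector set \<Rightarrow> ('a \<Rightarrow> 'b::real_normed_vector) \<Rightarrow> bool" where
  "C1_on S f \<longleftrightarrow> (\<exists>f'. (\<forall>x\<in>S. (f has_derivative blinfun_apply (f' x)) (at x)) \<and> continuous_on S f')"

definition C2_on :: "'a::real_normed_vector set \<Rightarrow> ('a \<Rightarrow> 'b::real_normed_vector) \<Rightarrow> bool" where
  "C2_on S f \<longleftrightarrow> (\<exists>f'. (\<forall>x\<in>S. (f has_derivative blinfun_apply (f' x)) (at x)) \<and> C1_on S f')"

definition C2_diffeo :: "(R3 \<Rightarrow> R3) \<Rightarrow> bool" where
  "C2_diffeo f \<longleftrightarrow> bij f \<and> C2_on UNIV f \<and> C2_on UNIV (inv f)"

definition variation_family :: "real \<Rightarrow> (real \<Rightarrow> R3 \<Rightarrow> R3) \<Rightarrow> (R3 \<Rightarrow> R3) \<Rightarrow> bool" where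
  "variation_family \<epsilon> \<Phi> \<eta> \<longleftrightarrow>
     0 < \<epsilon> \<and> (\<forall>t\<in>{-\<epsilon><..<\<epsilon>}. C2_diffeo (\<Phi> t)) \<and> \<Phi> 0 = id \<and>
     C2_on ({-\<epsilon><..<\<epsilon>} \<times> UNIV) (\<lambda>(t, x). \<Phi> t x) \<and>
     (\<forall>x. ((\<lambda>t. \<Phi> t x) has_vector_derivative \<eta> x) (at 0))"

definition variation_field :: "(R3 \<Rightarrow> R3) \<Rightarrow> bool" where
  "variation_field \<eta> \<longleftrightarrow> (\<exists>\<epsilon> \<Phi>. variation_family \<epsilon> \<Phi> \<eta>)"

definition thickening_field :: "R3 set \<Rightarrow> (R3 \<Rightarrow> R3) \<Rightarrow> bool" where
  "thickening_field L \<eta> \<longleftrightarrow>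
     (\<exists>\<epsilon> \<Phi> D. variation_family \<epsilon> \<Phi> \<eta> \<and> 0 < D \<and>
        ((\<lambda>t. Thi (\<Phi> t ` L)) has_real_derivative D) (at 0 within {0..}))"

definition regular :: "R3 set \<Rightarrow> bool" where
  "regular L \<longleftrightarrow> (\<exists>\<eta>. thickening_field L \<eta>)"

definition subgroup_O3 :: "(real ^ 3 ^ 3) set \<Rightarrow> bool" where
  "subgroup_O3 G \<longleftrightarrow> (\<forall>A\<in>G. orthogonal_matrix A) \<and> mat 1 \<in> G \<and>
     (\<forall>A\<in>G. \<forall>B\<in>G. A ** B \<in> G) \<and> (\<forall>A\<in>G. matrix_inv A \<in> G)"

definition G_invariant_set :: "(real ^ 3 ^ 3) set \<Rightarrow> R3 set \<Rightarrow> bool" where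
  "G_invariant_set G L \<longleftrightarrow> (\<forall>g\<in>G. (\<lambda>x. g *v x) ` L = L)"

definition G_invariant_field :: "(real ^ 3 ^ 3) set \<Rightarrow> (R3 \<Rightarrow> R3) \<Rightarrow> bool" where
  "G_invariant_field G \<eta> \<longleftrightarrow> (\<forall>g\<in>G. \<forall>x. \<eta> (g *v x) = g *v \<eta> x)"

definition G_regular :: "(real ^ 3 ^ 3) set \<Rightarrow> R3 set \<Rightarrow> bool" where
  "G_regular G L \<longleftrightarrow> (\<exists>\<eta>. G_invariant_field G \<eta> \<and> thickening_field L \<eta>)"

end

theory Submission
  imports Defs
begin

text \<open>The dilations \<open>x \<mapsto> (1 + t) x\<close> form a smooth family of diffeomorphisms
  with velocity field \<open>\<eta>(x) = x\<close>, and they scale the reach linearly: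
  \<open>Thi((1 + t) L) = (1 + t) Thi L\<close>. Hence \<open>\<delta>\<^sub>\<eta> Thi L = Thi L > 0\<close>, and \<open>\<eta>\<close>
  commutes with every linear map, so it is \<open>G\<close>-invariant for every \<open>G \<subseteq> O(3)\<close>.
  The scaling identity needs the reach of a link to be finite: otherwise every
  point of \<open>\<real>\<^sup>3\<close> would have a unique nearest point on \<open>L\<close>, the nearest-point map
  would retract \<open>\<real>\<^sup>3\<close> onto \<open>L\<close>, and \<open>L\<close> would be contractible, hence a single
  closed curve, i.e. a circle.\<close>

lemma C1_on_const_plus_linear:
  assumes "bounded_linear f"
  shows "C1_on S (\<lambda>x. c + f x)"
  unfolding C1_on_def
proof (intro exI conjI ballI)
  fix x
  show "((\<lambda>x. c + f x) has_derivative blinfun_apply (Blinfun f)) (at x)"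
    using has_derivative_add[OF has_derivative_const bounded_linear_imp_has_derivative[OF assms]]
    by (simp add: bounded_linear_Blinfun_apply[OF assms])
qed (rule continuous_on_const)

lemma C2_on_bounded_linear:
  assumes "bounded_linear f"
  shows "C2_on S f"
  unfolding C2_on_def
proof (intro exI conjI ballI)
  fix x
  show "(f has_derivative blinfun_apply (Blinfun f)) (at x)"
    using assms by (simp add: bounded_linear_Blinfun_apply bounded_linear_imp_has_derivative)
  show "C1_on S (\<lambda>_. Blinfun f)"
    using C1_on_const_plus_linear[of "\<lambda>_. 0", OF bounded_linear_zero] by simp
qed

definition scaleR_derivative :: "real \<times> 'a \<Rightarrow> (real \<times> 'a) \<Rightarrow>\<^sub>L 'a::real_normed_vector" where
  "scaleR_derivative p =
     (blinfun_scaleR_left (snd p) o\<^sub>L fst_blinfun) + (blinfun_scaleR_right (fst p) o\<^sub>L snd_blinfun)"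

lemma bounded_linear_scaleR_derivative: "bounded_linear scaleR_derivative"
  unfolding scaleR_derivative_def
  by (intro bounded_linear_add
      bounded_linear_compose[OF bounded_bilinear.bounded_linear_left[OF bounded_bilinear_blinfun_compose]]
      bounded_linear_compose[OF bounded_linear_blinfun_scaleR_left]
      bounded_linear_compose[OF bounded_linear_blinfun_scaleR_right]
      bounded_linear_fst bounded_linear_snd)

definition dilation :: "real \<Rightarrow> 'a \<Rightarrow> 'a::real_vector" where
  "dilation t x = (1 + t) *\<^sub>R x"

lemma C2_on_dilation:
  "C2_on S (\<lambda>(t, x::'a::real_normed_vector). dilation t x)"
  unfolding C2_on_def
proof (intro exI conjI ballI)
  fix p :: "real \<times> 'a"
  show "((\<lambda>(t, x). dilation t x) has_derivative
          blinfun_apply (snd_blinfun + scaleR_derivative p)) (at p)"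
    by (auto intro!: derivative_eq_intros
        simp: fun_eq_iff split_beta' dilation_def scaleR_derivative_def plus_blinfun.rep_eq
              blinfun_scaleR_right.rep_eq algebra_simps)
  show "C1_on S (\<lambda>p. snd_blinfun + scaleR_derivative p)"
    by (rule C1_on_const_plus_linear[OF bounded_linear_scaleR_derivative])
qed

lemma bij_scaleR: "c \<noteq> 0 \<Longrightarrow> bij (\<lambda>x::'a::real_vector. c *\<^sub>R x)"
  by (intro bij_betwI[of _ _ _ "\<lambda>x. (1/c) *\<^sub>R x"]) auto

lemma inv_scaleR: "c \<noteq> 0 \<Longrightarrow> inv (\<lambda>x::'a::real_vector. c *\<^sub>R x) = (\<lambda>x. (1/c) *\<^sub>R x)"
  by (rule inv_unique_comp) (auto simp: fun_eq_iff)

lemma C2_diffeo_scaleR: "c \<noteq> 0 \<Longrightarrow> C2_diffeo (\<lambda>x. c *\<^sub>R x)"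
  unfolding C2_diffeo_def
  by (simp add: bij_scaleR inv_scaleR C2_on_bounded_linear bounded_linear_scaleR_right)

lemma variation_family_dilation: "variation_family (1/2) dilation (\<lambda>x. x)"
  unfolding variation_family_def
proof (intro conjI ballI allI)
  fix t :: real
  assume "t \<in> {-(1/2)<..<1/2}"
  then show "C2_diffeo (dilation t)"
    unfolding dilation_def[abs_def] by (intro C2_diffeo_scaleR) auto
next
  show "C2_on ({-(1/2)<..<1/2} \<times> UNIV) (\<lambda>(t, x). dilation t x)"
    by (rule C2_on_dilation)
  fix x :: R3
  show "((\<lambda>t. dilation t x) has_vector_derivative x) (at 0)"
    unfolding dilation_def by (auto intro!: derivative_eq_intros)
qed (auto simp: dilation_def fun_eq_iff)

definition reach_radii :: "'a::metric_space set \<Rightarrow> real set" where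
  "reach_radii L = {\<epsilon>. 0 \<le> \<epsilon> \<and>
      (\<forall>x. infdist x L < \<epsilon> \<longrightarrow> (\<exists>!p. p \<in> L \<and> dist x p = infdist x L))}"

lemma Thi_eq_Sup_reach_radii: "Thi L = Sup (reach_radii L)"
  by (simp add: Thi_def reach_radii_def)

lemma zero_in_reach_radii: "0 \<in> reach_radii L"
  unfolding reach_radii_def using infdist_nonneg not_less by fastforce

lemma infdist_scaleR:
  fixes A :: "'a::real_normed_vector set"
  assumes "c > 0"
  shows "infdist (c *\<^sub>R x) ((*\<^sub>R) c ` A) = c * infdist x A"
proof (cases "A = {}")
  case False
  have "dist (c *\<^sub>R x) ` (*\<^sub>R) c ` A = (*) c ` dist x ` A"
    using assms by (auto simp: image_image dist_norm scaleR_diff_right[symmetric])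
  moreover have "c * Inf (dist x ` A) = Inf ((*) c ` dist x ` A)"
    using False assms
    by (intro continuous_at_Inf_mono) (auto intro!: monoI continuous_intros bdd_belowI[of _ 0])
  ultimately show ?thesis
    using False by (simp add: infdist_notempty)
qed (simp add: infdist_def)

lemma scaleR_mem_reach_radii:
  fixes L :: "'a::real_normed_vector set"
  assumes "c > 0" "e \<in> reach_radii L"
  shows "c * e \<in> reach_radii ((*\<^sub>R) c ` L)"
  unfolding reach_radii_def mem_Collect_eq
proof (intro conjI allI impI)
  show "0 \<le> c * e" using assms by (simp add: reach_radii_def)
  have dist_scaled: "dist (c *\<^sub>R x) (c *\<^sub>R p) = c * dist x p" for x p :: 'a
    using assms by (simp add: dist_norm scaleR_diff_right[symmetric])
  fix y :: 'a
  assume y: "infdist y ((*\<^sub>R) c ` L) < c * e"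
  define x where "x = (1/c) *\<^sub>R y"
  have y_eq: "y = c *\<^sub>R x"
    using assms by (simp add: x_def)
  have infdist_y: "infdist y ((*\<^sub>R) c ` L) = c * infdist x L"
    unfolding y_eq by (rule infdist_scaleR[OF assms(1)])
  then have "infdist x L < e" using y assms by simp
  then obtain p where p: "p \<in> L" "dist x p = infdist x L"
    and p_unique: "\<And>q. q \<in> L \<Longrightarrow> dist x q = infdist x L \<Longrightarrow> q = p"
    using assms(2) unfolding reach_radii_def by blast
  show "\<exists>!q. q \<in> (*\<^sub>R) c ` L \<and> dist y q = infdist y ((*\<^sub>R) c ` L)"
  proof (rule ex1I[of _ "c *\<^sub>R p"])
    show "c *\<^sub>R p \<in> (*\<^sub>R) c ` L \<and> dist y (c *\<^sub>R p) = infdist y ((*\<^sub>R) c ` L)"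
      using p y_eq infdist_y dist_scaled by auto
  next
    fix q assume q: "q \<in> (*\<^sub>R) c ` L \<and> dist y q = infdist y ((*\<^sub>R) c ` L)"
    then obtain r where r: "r \<in> L" "q = c *\<^sub>R r" by auto
    then have "dist x r = infdist x L"
      using q y_eq infdist_y dist_scaled assms by simp
    then show "q = c *\<^sub>R p" using p_unique r by simp
  qed
qed

lemma reach_radii_scaleR:
  fixes L :: "'a::real_normed_vector set"
  assumes "c > 0"
  shows "reach_radii ((*\<^sub>R) c ` L) = (*) c ` reach_radii L"
proof
  show "(*) c ` reach_radii L \<subseteq> reach_radii ((*\<^sub>R) c ` L)"
    using scaleR_mem_reach_radii[OF assms] by auto
  show "reach_radii ((*\<^sub>R) c ` L) \<subseteq> (*) c ` reach_radii L"
  proof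
    fix e assume "e \<in> reach_radii ((*\<^sub>R) c ` L)"
    from scaleR_mem_reach_radii[OF _ this, of "1/c"] assms
    have "(1/c) * e \<in> reach_radii L" by (simp add: image_image)
    moreover have "e = c * ((1/c) * e)" using assms by simp
    ultimately show "e \<in> (*) c ` reach_radii L" by blast
  qed
qed

text \<open>Without the boundedness hypothesis both sides are junk values of \<open>Sup\<close>.\<close>
lemma Thi_scaleR:
  assumes "bdd_above (reach_radii L)" "c > 0"
  shows "Thi ((*\<^sub>R) c ` L) = c * Thi L"
  unfolding Thi_eq_Sup_reach_radii reach_radii_scaleR[OF assms(2)]
  using assms zero_in_reach_radii
  by (intro continuous_at_Sup_mono[symmetric]) (auto intro!: monoI continuous_intros)

lemma closed_curve_compact: "closed_curve C \<Longrightarrow> compact C"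
  unfolding closed_curve_def by (metis compact_path_image simple_path_imp_path)

lemma closed_curve_nonempty: "closed_curve C \<Longrightarrow> C \<noteq> {}"
  unfolding closed_curve_def by (metis path_image_nonempty)

lemma closed_curve_not_contractible: "closed_curve C \<Longrightarrow> \<not> contractible C"
proof
  assume "closed_curve C" "contractible C"
  then obtain g where "simple_path g" "pathfinish g = pathstart g" "C = path_image g"
    unfolding closed_curve_def by blast
  then have "C homeomorphic sphere (0::complex) 1"
    by (simp add: homeomorphic_simple_path_image_circle)
  with \<open>contractible C\<close> have "contractible (sphere (0::complex) 1)"
    using homeomorphic_contractible by blast
  then show False by (simp add: contractible_sphere)
qed

lemma compact_link: "is_link L \<Longrightarrow> compact L"
  unfolding is_link_def by (auto intro!: compact_Union simp: closed_curve_compact)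

lemma connected_link_is_closed_curve:
  assumes "is_link L" "connected L"
  shows "closed_curve L"
proof -
  obtain \<C> where \<C>: "finite \<C>" "\<C> \<noteq> {}" "\<forall>C\<in>\<C>. closed_curve C" "pairwise disjnt \<C>"
    and L_eq: "L = \<Union>\<C>"
    using assms(1) unfolding is_link_def by blast
  obtain C0 where C0: "C0 \<in> \<C>" using \<C>(2) by blast
  define R where "R = \<Union>(\<C> - {C0})"
  have C0_curve: "closed_curve C0" using \<C>(3) C0 by blast
  have "closed R"
    unfolding R_def using \<C>(1,3)
    by (intro closed_Union) (auto intro: compact_imp_closed closed_curve_compact)
  moreover have "closed C0" using C0_curve by (simp add: compact_imp_closed closed_curve_compact)
  moreover have "C0 \<inter> R = {}"
    using \<C>(4) C0 unfolding R_def by (auto simp: pairwise_def disjnt_def)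
  moreover have L_split: "L = C0 \<union> R"
    using L_eq C0 unfolding R_def by auto
  moreover have "C0 \<noteq> {}" using C0_curve by (rule closed_curve_nonempty)
  ultimately have "R = {}"
    using assms(2) unfolding connected_closed by blast
  then show ?thesis using L_split C0_curve by simp
qed

lemma link_not_contractible: "is_link L \<Longrightarrow> \<not> contractible L"
  using connected_link_is_closed_curve closed_curve_not_contractible contractible_imp_connected
  by blast

text \<open>The nearest-point map has a closed graph, hence is continuous since its values lie in a compact set.\<close>
lemma retract_of_UNIV_if_unique_nearest:
  fixes L :: "'a::euclidean_space set"
  assumes "compact L" and unique: "\<And>x. \<exists>!p. p \<in> L \<and> dist x p = infdist x L"
  shows "L retract_of UNIV"
proof -
  define P where "P x = (THE p. p \<in> L \<and> dist x p = infdist x L)" for x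
  have P: "P x \<in> L \<and> dist x (P x) = infdist x L" for x
    unfolding P_def by (rule theI'[OF unique])
  have P_id: "P x = x" if "x \<in> L" for x
    using unique[of x] P[of x] that by auto
  have graph_eq: "(\<lambda>x. (x, P x)) ` UNIV = (UNIV \<times> L) \<inter> {z. dist (fst z) (snd z) = infdist (fst z) L}"
  proof (intro equalityI subsetI)
    fix z assume "z \<in> (UNIV \<times> L) \<inter> {z. dist (fst z) (snd z) = infdist (fst z) L}"
    then obtain x p where z: "z = (x, p)" "p \<in> L" "dist x p = infdist x L" by auto
    then have "p = P x" using unique[of x] P[of x] by auto
    then show "z \<in> (\<lambda>x. (x, P x)) ` UNIV" using z by auto
  qed (use P in auto)
  have "closed ((\<lambda>x. (x, P x)) ` UNIV)"
    unfolding graph_eq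
    by (intro closed_Int closed_Times closed_Collect_eq compact_imp_closed assms(1) closed_UNIV)
      (auto intro!: continuous_intros)
  then have "continuous_on UNIV P"
    using P by (intro continuous_from_closed_graph[OF assms(1)]) auto
  then have "retraction UNIV L P"
    unfolding retraction_def using P P_id by (auto simp: image_iff)
  then show ?thesis unfolding retract_of_def by blast
qed

lemma bdd_above_reach_radii_link:
  assumes "is_link L"
  shows "bdd_above (reach_radii L)"
proof (rule ccontr)
  assume unbounded: "\<not> bdd_above (reach_radii L)"
  have "\<exists>!p. p \<in> L \<and> dist x p = infdist x L" for x
  proof -
    obtain e where "e \<in> reach_radii L" "infdist x L < e"
      using unbounded unfolding bdd_above_def by (meson not_le)
    then show ?thesis unfolding reach_radii_def by blast
  qed
  then have "L retract_of UNIV"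
    by (rule retract_of_UNIV_if_unique_nearest[OF compact_link[OF assms]])
  then have "contractible L"
    by (rule retract_of_contractible[rotated]) (simp add: convex_imp_contractible)
  then show False using link_not_contractible[OF assms] by contradiction
qed

lemma thickening_field_identity:
  assumes "is_link L" "Thi L > 0"
  shows "thickening_field L (\<lambda>x. x)"
proof -
  have Thi_dilation: "Thi (dilation t ` L) = (1 + t) * Thi L" if "t \<in> {0..}" for t
    using Thi_scaleR[OF bdd_above_reach_radii_link[OF assms(1)], of "1 + t"] that
    by (simp add: dilation_def[abs_def])
  have "((\<lambda>t. (1 + t) * Thi L) has_real_derivative Thi L) (at 0 within {0..})"
    by (auto intro!: derivative_eq_intros)
  then have "((\<lambda>t. Thi (dilation t ` L)) has_real_derivative Thi L) (at 0 within {0..})"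
    by (rule has_field_derivative_transform_within[of _ _ _ _ 1]) (auto simp: Thi_dilation)
  then show ?thesis
    unfolding thickening_field_def using variation_family_dilation assms(2) by blast
qed

theorem lemma3p7:
  fixes L :: "R3 set"
  assumes "is_link L"
    and "Thi L > 0"
  shows "regular L \<and>
         (\<forall>G. subgroup_O3 G \<and> G_invariant_set G L \<longrightarrow> G_regular G L)"
proof -
  have "thickening_field L (\<lambda>x. x)"
    using assms by (rule thickening_field_identity)
  moreover have "G_invariant_field G (\<lambda>x. x)" for G
    by (simp add: G_invariant_field_def)
  ultimately show ?thesis
    by (auto simp: regular_def G_regular_def)
qed

end
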